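(* Fix an index $i$ and suppose its list is involved in $q_i$ good queries, each for an object present in the table. Let $\mathcal{A}^{\mathrm{ins}}_i$ be the algorithm's total RB cost for inserting the good objects of list $i$, and let $\mathcal{B}_i$ be the adversary's total RB cost for bad queries and bad insertions in list $i$. Then, for these $q_i$ queries, the algorithm's total RB cost and its total latency are each at most $$\mathcal{A}^{\mathrm{ins}}_i+\ell_i\big(q_i+\sqrt{2q_i\,\mathcal{B}_i}\big).$$
   Context: Model. A hash table has $t$ indices with chaining. The objects at an index form a list, new objects are appended at the tail, and $L_i$ denotes the current number of objects in the list at index $i$. The depth of an object is its position counted from the head of its list (the head has depth $1$). Algorithm \textsc{Depth Charge}: - Inserting at index $i$ costs the inserter an RB (resource-burning) cost of $L_i+1$ and has latency $1$. - Querying a present object at depth $\Delta$ costs $\Delta$, has latency $\Delta$, and then moves the object to the head of its list (move-to-front). - Querying an absent object costs $L_i$. - Deletions are handled like queries, except that the found object is removed. Good objects (inserted by clients) go to uniformly random indices; clients query only good objects. A Byzantine adversary inserts bad objects at indices of its choice, may query any object, and schedules all requests. $\ell_i$ is the maximum number of good objects ever present in the list at index $i$. *)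

theory Defs
  imports Complex_Main
begin

text \<open>Model of the single list at a fixed index i under Depth Charge.
  An object is a pair (identifier, is_good). The list is ordered head first.\<close>

type_synonym obj = "nat \<times> bool"

datatype req =
    GIns nat   \<comment> \<open>client inserts a good object\<close>
  | BIns nat   \<comment> \<open>adversary inserts a bad object\<close>
  | GQry nat   \<comment> \<open>client queries a good object\<close>
  | GDel nat   \<comment> \<open>client deletes a good object\<close>
  | BQry nat   \<comment> \<open>adversary queries any object (present or absent)\<close>
  | BDel nat   \<comment> \<open>adversary deletes any object (present or absent)\<close>

definition present :: "nat \<Rightarrow> obj list \<Rightarrow> bool" where
  "present x s \<longleftrightarrow> x \<in> fst ` set s"

text \<open>Depth of object x (head has depth 1).\<close>
definition depth :: "nat \<Rightarrow> obj list \<Rightarrow> nat" where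
  "depth x s = length (takeWhile (\<lambda>y. fst y \<noteq> x) s) + 1"

definition mtf :: "nat \<Rightarrow> obj list \<Rightarrow> obj list" where
  "mtf x s = filter (\<lambda>y. fst y = x) s @ filter (\<lambda>y. fst y \<noteq> x) s"

definition remove_obj :: "nat \<Rightarrow> obj list \<Rightarrow> obj list" where
  "remove_obj x s = filter (\<lambda>y. fst y \<noteq> x) s"

fun step :: "obj list \<Rightarrow> req \<Rightarrow> obj list" where
  "step s (GIns x) = s @ [(x, True)]"
| "step s (BIns x) = s @ [(x, False)]"
| "step s (GQry x) = (if present x s then mtf x s else s)"
| "step s (BQry x) = (if present x s then mtf x s else s)"
| "step s (GDel x) = (if present x s then remove_obj x s else s)"
| "step s (BDel x) = (if present x s then remove_obj x s else s)"

fun ok :: "obj list \<Rightarrow> req \<Rightarrow> bool" where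
  "ok s (GIns x) = (\<not> present x s)"
| "ok s (BIns x) = (\<not> present x s)"
| "ok s (GQry x) = ((x, True) \<in> set s)"
| "ok s (GDel x) = ((x, True) \<in> set s)"
| "ok s (BQry x) = True"
| "ok s (BDel x) = True"

definition qcost :: "nat \<Rightarrow> obj list \<Rightarrow> nat" where
  "qcost x s = (if present x s then depth x s else length s)"

text \<open>Algorithm's RB cost for inserting good objects (L_i + 1).\<close>
fun good_ins_cost :: "obj list \<Rightarrow> req \<Rightarrow> nat" where
  "good_ins_cost s (GIns x) = length s + 1"
| "good_ins_cost s _ = 0"

fun good_qry_cost :: "obj list \<Rightarrow> req \<Rightarrow> nat" where
  "good_qry_cost s (GQry x) = qcost x s"
| "good_qry_cost s _ = 0"

fun good_qry_latency :: "obj list \<Rightarrow> req \<Rightarrow> nat" where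
  "good_qry_latency s (GQry x) = (if present x s then depth x s else 0)"
| "good_qry_latency s _ = 0"

fun good_qry_count :: "obj list \<Rightarrow> req \<Rightarrow> nat" where
  "good_qry_count s (GQry x) = 1"
| "good_qry_count s _ = 0"

fun bad_cost :: "obj list \<Rightarrow> req \<Rightarrow> nat" where
  "bad_cost s (BIns x) = length s + 1"
| "bad_cost s (BQry x) = qcost x s"
| "bad_cost s (BDel x) = qcost x s"
| "bad_cost s _ = 0"

fun valid :: "obj list \<Rightarrow> req list \<Rightarrow> bool" where
  "valid s [] = True"
| "valid s (r # rs) = (ok s r \<and> valid (step s r) rs)"

fun total :: "(obj list \<Rightarrow> req \<Rightarrow> nat) \<Rightarrow> obj list \<Rightarrow> req list \<Rightarrow> nat" where
  "total f s [] = 0"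
| "total f s (r # rs) = f s r + total f (step s r) rs"

definition ngood :: "obj list \<Rightarrow> nat" where
  "ngood s = length (filter snd s)"

text \<open>Maximum number of good objects ever present (ell_i).\<close>
fun maxgood :: "obj list \<Rightarrow> req list \<Rightarrow> nat" where
  "maxgood s [] = ngood s"
| "maxgood s (r # rs) = max (ngood s) (maxgood (step s r) rs)"

end

theory Submission
  imports Defs "HOL-Analysis.Convex"
begin

text \<open>Each good object \<open>g\<close> is charged for the bad objects that overtake it. Let \<open>u g\<close> be the
  number of bad objects ahead of \<open>g\<close> when \<open>g\<close> reached its current position (on insertion, or
  \<open>0\<close> after a move to the front); this much is prepaid by the insertion cost \<open>L\<^sub>i + 1\<close>.
  A bad object overtakes \<open>g\<close> only by being queried from behind \<open>g\<close>, which costs the adversary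
  more than the current excess \<open>z = bad_ahead g - u g\<close>; charging that cost to every good object
  (at most \<open>\<ell>\<^sub>i\<close> of them) keeps \<open>z (z + 1) \<le> 2 C g\<close>, where \<open>C g\<close> is the adversary cost
  charged to \<open>g\<close>. A good query of \<open>g\<close> has depth at most \<open>\<ell>\<^sub>i + u g + z\<close>, so summing over
  the queries, the excesses \<open>z\<^sub>j\<close> satisfy \<open>\<Sum> z\<^sub>j (z\<^sub>j + 1) \<le> 2 \<ell>\<^sub>i B\<^sub>i\<close>, and Cauchy-Schwarz
  gives \<open>\<Sum> z\<^sub>j \<le> sqrt (q\<^sub>i \<cdot> 2 \<ell>\<^sub>i B\<^sub>i) \<le> \<ell>\<^sub>i sqrt (2 q\<^sub>i B\<^sub>i)\<close>.\<close>

definition nbad :: "obj list \<Rightarrow> nat" where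
  "nbad s = length (filter (\<lambda>y. \<not> snd y) s)"

definition bad_ahead :: "nat \<Rightarrow> obj list \<Rightarrow> nat" where
  "bad_ahead x s = nbad (takeWhile (\<lambda>y. fst y \<noteq> x) s)"

lemma length_eq_nbad_plus_ngood: "length s = nbad s + ngood s"
  by (induction s) (auto simp: nbad_def ngood_def)

lemma ngood_Nil [simp]: "ngood [] = 0"
  by (simp add: ngood_def)

lemma ngood_append [simp]: "ngood (xs @ ys) = ngood xs + ngood ys"
  by (simp add: ngood_def)

lemma ngood_Cons [simp]: "ngood (y # s) = (if snd y then 1 else 0) + ngood s"
  by (simp add: ngood_def)

lemma bad_ahead_Cons_self [simp]: "bad_ahead x ((x, v) # s) = 0"
  by (simp add: bad_ahead_def nbad_def)

lemma bad_ahead_Cons_other: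
  "fst y \<noteq> x \<Longrightarrow> bad_ahead x (y # s) = (if snd y then 0 else 1) + bad_ahead x s"
  by (simp add: bad_ahead_def nbad_def)

lemma bad_ahead_append_notin:
  "x \<notin> fst ` set xs \<Longrightarrow> bad_ahead x (xs @ ys) = nbad xs + bad_ahead x ys"
  by (induction xs) (auto simp: nbad_def bad_ahead_Cons_other)

lemma bad_ahead_append_in:
  "x \<in> fst ` set xs \<Longrightarrow> bad_ahead x (xs @ ys) = bad_ahead x xs"
  by (induction xs) (force simp: bad_ahead_def)+

lemma bad_ahead_less_length: "x \<in> fst ` set xs \<Longrightarrow> bad_ahead x xs < length xs"
  by (induction xs) (force simp: bad_ahead_def nbad_def)+

lemma bad_ahead_move_good_to_front:
  assumes "g \<noteq> x"
  shows "bad_ahead g ((x, True) # xs @ ys) = bad_ahead g (xs @ (x, True) # ys)"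
  using assms by (cases "g \<in> fst ` set xs")
    (simp_all add: bad_ahead_append_in bad_ahead_append_notin bad_ahead_Cons_other)

lemma bad_ahead_move_bad_to_front:
  assumes "g \<noteq> x"
  shows "bad_ahead g ((x, False) # xs @ ys) =
    bad_ahead g (xs @ (x, False) # ys) + (if g \<in> fst ` set xs then 1 else 0)"
  using assms by (simp add: bad_ahead_append_in bad_ahead_append_notin bad_ahead_Cons_other)

lemma bad_ahead_remove_le:
  "g \<noteq> x \<Longrightarrow> bad_ahead g (xs @ ys) \<le> bad_ahead g (xs @ (x, v) # ys)"
  by (cases "g \<in> fst ` set xs")
    (simp_all add: bad_ahead_append_in bad_ahead_append_notin bad_ahead_Cons_other)

lemma split_at_present:
  assumes "(x, v) \<in> set s" "distinct (map fst s)"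
  obtains xs ys where "s = xs @ (x, v) # ys" "x \<notin> fst ` set xs" "x \<notin> fst ` set ys"
    "mtf x s = (x, v) # xs @ ys" "remove_obj x s = xs @ ys"
    "depth x s = length xs + 1" "bad_ahead x s = nbad xs"
proof -
  obtain xs ys where s: "s = xs @ (x, v) # ys"
    using split_list[OF assms(1)] by blast
  with assms(2) have "x \<notin> fst ` set xs" "x \<notin> fst ` set ys" by auto
  moreover from this have "filter (\<lambda>y. fst y = x) zs = []" "filter (\<lambda>y. fst y \<noteq> x) zs = zs"
    if "zs \<in> {xs, ys}" for zs
    using that by (auto simp: filter_empty_conv filter_id_conv)
  moreover have "takeWhile (\<lambda>y. fst y \<noteq> x) s = xs"
    using s \<open>x \<notin> fst ` set xs\<close> by (subst s, subst takeWhile_append2) auto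
  ultimately show thesis
    by (intro that[OF s]) (auto simp: s mtf_def remove_obj_def depth_def bad_ahead_def)
qed

lemma distinct_step:
  assumes "distinct (map fst s)" "ok s r"
  shows "distinct (map fst (step s r))"
proof -
  have "distinct (map fst (mtf x s))" for x
    using assms(1) by (auto simp: mtf_def distinct_map_filter)
  moreover have "distinct (map fst (remove_obj x s))" for x
    using assms(1) by (simp add: remove_obj_def distinct_map_filter)
  ultimately show ?thesis
    using assms by (cases r) (auto simp: present_def)
qed

definition good_sum :: "obj list \<Rightarrow> (nat \<Rightarrow> nat) \<Rightarrow> nat" where
  "good_sum s f = (\<Sum>y\<leftarrow>filter snd s. f (fst y))"

lemma good_sum_Nil [simp]: "good_sum [] f = 0"
  by (simp add: good_sum_def)

lemma good_sum_append [simp]: "good_sum (xs @ ys) f = good_sum xs f + good_sum ys f"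
  by (simp add: good_sum_def)

lemma good_sum_Cons [simp]: "good_sum (y # s) f = (if snd y then f (fst y) else 0) + good_sum s f"
  by (simp add: good_sum_def)

lemma good_sum_upd [simp]: "x \<notin> fst ` set s \<Longrightarrow> good_sum s (f(x := a)) = good_sum s f"
  by (induction s) auto

lemma good_sum_plus_const: "good_sum s (\<lambda>g. f g + d) = good_sum s f + ngood s * d"
  by (induction s) auto

definition overtakers_paid :: "obj list \<Rightarrow> (nat \<Rightarrow> nat) \<Rightarrow> (nat \<Rightarrow> nat) \<Rightarrow> bool" where
  "overtakers_paid s u C \<longleftrightarrow> (\<forall>g. (g, True) \<in> set s \<longrightarrow>
     (bad_ahead g s - u g) * (bad_ahead g s - u g + 1) \<le> 2 * C g)"

lemma overtakers_paidD:
  "overtakers_paid s u C \<Longrightarrow> (g, True) \<in> set s \<Longrightarrow>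
    (bad_ahead g s - u g) * (bad_ahead g s - u g + 1) \<le> 2 * C g"
  by (simp add: overtakers_paid_def)

lemma overtakers_paid_Nil: "overtakers_paid [] u C"
  by (simp add: overtakers_paid_def)

lemma overtakers_paid_append_good:
  assumes "overtakers_paid s u C" "x \<notin> fst ` set s"
  shows "overtakers_paid (s @ [(x, True)]) (u(x := nbad s)) (C(x := 0))"
  unfolding overtakers_paid_def
proof (intro allI impI)
  fix g assume "(g, True) \<in> set (s @ [(x, True)])"
  then consider "g = x" | "(g, True) \<in> set s" "g \<noteq> x" by auto
  then show "(bad_ahead g (s @ [(x, True)]) - (u(x := nbad s)) g) *
      (bad_ahead g (s @ [(x, True)]) - (u(x := nbad s)) g + 1) \<le> 2 * (C(x := 0)) g"
  proof cases
    case 1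
    with assms(2) show ?thesis by (simp add: bad_ahead_append_notin)
  next
    case 2
    then have "g \<in> fst ` set s" by force
    with 2 overtakers_paidD[OF assms(1)] show ?thesis by (simp add: bad_ahead_append_in)
  qed
qed

lemma overtakers_paid_append_bad:
  assumes "overtakers_paid s u C"
  shows "overtakers_paid (s @ [(x, False)]) u C"
proof -
  have "g \<in> fst ` set s" if "(g, True) \<in> set s" for g
    using that by force
  with assms show ?thesis by (auto simp: overtakers_paid_def bad_ahead_append_in)
qed

lemma overtakers_paid_move_good_to_front:
  assumes "overtakers_paid (xs @ (x, True) # ys) u C" "x \<notin> fst ` set xs" "x \<notin> fst ` set ys"
  shows "overtakers_paid ((x, True) # xs @ ys) (u(x := a)) (C(x := c))"
  unfolding overtakers_paid_def
proof (intro allI impI)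
  fix g assume g: "(g, True) \<in> set ((x, True) # xs @ ys)"
  show "(bad_ahead g ((x, True) # xs @ ys) - (u(x := a)) g) *
      (bad_ahead g ((x, True) # xs @ ys) - (u(x := a)) g + 1) \<le> 2 * (C(x := c)) g"
  proof (cases "g = x")
    case False
    with g have "(g, True) \<in> set (xs @ (x, True) # ys)" by auto
    with False overtakers_paidD[OF assms(1)] show ?thesis
      by (simp add: bad_ahead_move_good_to_front)
  qed simp
qed

lemma pronic_Suc_le:
  fixes k c d :: nat
  assumes "k * (k + 1) \<le> 2 * c" "k + 1 \<le> d"
  shows "(k + 1) * (k + 2) \<le> 2 * (c + d)"
proof -
  have "(k + 1) * (k + 2) = k * (k + 1) + 2 * (k + 1)" by (simp add: algebra_simps)
  also have "\<dots> \<le> 2 * c + 2 * d" using assms by (intro add_mono) simp_all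
  finally show ?thesis by simp
qed

lemma overtakers_paid_move_bad_to_front:
  assumes "overtakers_paid (xs @ (x, False) # ys) u C" "x \<notin> fst ` set xs" "x \<notin> fst ` set ys"
  shows "overtakers_paid ((x, False) # xs @ ys) u (\<lambda>g. C g + (length xs + 1))"
  unfolding overtakers_paid_def
proof (intro allI impI)
  fix g assume g: "(g, True) \<in> set ((x, False) # xs @ ys)"
  with assms(2,3) have "g \<noteq> x" by force
  define b where "b = bad_ahead g (xs @ (x, False) # ys)"
  from g have "(g, True) \<in> set (xs @ (x, False) # ys)" by auto
  with assms(1) have paid: "(b - u g) * (b - u g + 1) \<le> 2 * C g"
    unfolding b_def by (rule overtakers_paidD)
  show "(bad_ahead g ((x, False) # xs @ ys) - u g) *
      (bad_ahead g ((x, False) # xs @ ys) - u g + 1) \<le> 2 * (C g + (length xs + 1))"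
  proof (cases "g \<in> fst ` set xs \<and> u g \<le> b")
    case True
    then have "b < length xs"
      using bad_ahead_less_length by (simp add: b_def bad_ahead_append_in)
    with True paid pronic_Suc_le[of "b - u g" "C g" "length xs + 1"] show ?thesis
      using \<open>g \<noteq> x\<close> by (simp add: bad_ahead_move_bad_to_front b_def Suc_diff_le)
  next
    case False
    then have "bad_ahead g ((x, False) # xs @ ys) - u g = b - u g"
      by (auto simp: bad_ahead_move_bad_to_front[OF \<open>g \<noteq> x\<close>] b_def)
    with paid show ?thesis by simp
  qed
qed

lemma overtakers_paid_remove:
  assumes "overtakers_paid (xs @ (x, v) # ys) u C" "x \<notin> fst ` set xs" "x \<notin> fst ` set ys"
  shows "overtakers_paid (xs @ ys) u C"
  unfolding overtakers_paid_def
proof (intro allI impI)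
  fix g assume g: "(g, True) \<in> set (xs @ ys)"
  then have "(g, True) \<in> set (xs @ (x, v) # ys)" by auto
  with assms(1) have "(bad_ahead g (xs @ (x, v) # ys) - u g) *
      (bad_ahead g (xs @ (x, v) # ys) - u g + 1) \<le> 2 * C g"
    by (rule overtakers_paidD)
  moreover from g assms(2,3) have "g \<noteq> x" by force
  then have "bad_ahead g (xs @ ys) - u g \<le> bad_ahead g (xs @ (x, v) # ys) - u g"
    using bad_ahead_remove_le diff_le_mono by blast
  ultimately show "(bad_ahead g (xs @ ys) - u g) * (bad_ahead g (xs @ ys) - u g + 1) \<le> 2 * C g"
    by (meson add_le_mono1 mult_le_mono order_trans)
qed

lemma charging_good_query:
  assumes "(x, True) \<in> set s" "distinct (map fst s)" "overtakers_paid s u C"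
  defines "z \<equiv> bad_ahead x s - u x"
  shows "overtakers_paid (mtf x s) (u(x := 0)) (C(x := 0))"
    and "depth x s + good_sum (mtf x s) (u(x := 0)) \<le> ngood s + good_sum s u + z"
    and "z * (z + 1) + 2 * good_sum (mtf x s) (C(x := 0)) \<le> 2 * good_sum s C"
proof -
  obtain xs ys where s: "s = xs @ (x, True) # ys" "x \<notin> fst ` set xs" "x \<notin> fst ` set ys"
    and mtf: "mtf x s = (x, True) # xs @ ys"
    and depth: "depth x s = length xs + 1" and bad: "bad_ahead x s = nbad xs"
    using split_at_present[OF assms(1,2)] .
  show "overtakers_paid (mtf x s) (u(x := 0)) (C(x := 0))"
    using overtakers_paid_move_good_to_front assms(3) s mtf by simp
  show "depth x s + good_sum (mtf x s) (u(x := 0)) \<le> ngood s + good_sum s u + z"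
    using s mtf depth bad length_eq_nbad_plus_ngood[of xs] by (simp add: z_def)
  have "z * (z + 1) \<le> 2 * C x"
    unfolding z_def using assms(3,1) by (rule overtakers_paidD)
  then show "z * (z + 1) + 2 * good_sum (mtf x s) (C(x := 0)) \<le> 2 * good_sum s C"
    using s mtf by simp
qed

lemma charging_bad_query:
  assumes "(x, v) \<in> set s" "distinct (map fst s)" "overtakers_paid s u C"
  obtains C' where "overtakers_paid (mtf x s) u C'"
    and "good_sum (mtf x s) u = good_sum s u"
    and "good_sum (mtf x s) C' \<le> good_sum s C + ngood s * depth x s"
proof -
  obtain xs ys where s: "s = xs @ (x, v) # ys" "x \<notin> fst ` set xs" "x \<notin> fst ` set ys"
    and mtf: "mtf x s = (x, v) # xs @ ys" and depth: "depth x s = length xs + 1"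
    using split_at_present[OF assms(1,2)] .
  show thesis
  proof (cases v)
    case True
    with overtakers_paid_move_good_to_front[of xs x ys u C "u x" "C x"]
    have "overtakers_paid (mtf x s) u C" using assms(3) s mtf by simp
    with that[of C] show thesis using s mtf by simp
  next
    case False
    with overtakers_paid_move_bad_to_front[of xs x ys u C]
    have "overtakers_paid (mtf x s) u (\<lambda>g. C g + depth x s)" using assms(3) s mtf depth by simp
    with that[of "\<lambda>g. C g + depth x s"] show thesis
      using s mtf False by (simp add: good_sum_plus_const)
  qed
qed

lemma charging_remove:
  assumes "(x, v) \<in> set s" "distinct (map fst s)" "overtakers_paid s u C"
  shows "overtakers_paid (remove_obj x s) u C" and "good_sum (remove_obj x s) f \<le> good_sum s f"
proof -
  obtain xs ys where s: "s = xs @ (x, v) # ys" "x \<notin> fst ` set xs" "x \<notin> fst ` set ys"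
    and rem: "remove_obj x s = xs @ ys"
    using split_at_present[OF assms(1,2)] .
  show "overtakers_paid (remove_obj x s) u C"
    using overtakers_paid_remove assms(3) s rem by simp
  show "good_sum (remove_obj x s) f \<le> good_sum s f"
    using s rem by simp
qed

lemma charging_step:
  assumes "ok s r" "distinct (map fst s)" "overtakers_paid s u C"
  obtains u' C' zs where "overtakers_paid (step s r) u' C'" "length zs = good_qry_count s r"
    "good_qry_cost s r + good_sum (step s r) u'
       \<le> ngood s * length zs + good_sum s u + good_ins_cost s r + sum_list zs"
    "(\<Sum>z\<leftarrow>zs. z * (z + 1)) + 2 * good_sum (step s r) C'
       \<le> 2 * good_sum s C + 2 * ngood s * bad_cost s r"
proof (cases r)
  case (GIns x)
  with assms(1) have "x \<notin> fst ` set s" by (simp add: present_def)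
  with that[of "u(x := nbad s)" "C(x := 0)" "[]"] show thesis
    using GIns assms(3) overtakers_paid_append_good length_eq_nbad_plus_ngood[of s] by simp
next
  case (BIns x)
  with that[of u C "[]"] show thesis using assms(3) overtakers_paid_append_bad by simp
next
  case (GQry x)
  with assms(1) have "(x, True) \<in> set s" by simp
  moreover from this have "present x s" by (force simp: present_def)
  ultimately show thesis
    using that[of "u(x := 0)" "C(x := 0)" "[bad_ahead x s - u x]"] GQry
      charging_good_query[OF _ assms(2,3)] by (simp add: qcost_def)
next
  case (GDel x)
  with assms(1) have "(x, True) \<in> set s" by simp
  moreover from this have "present x s" by (force simp: present_def)
  ultimately show thesis
    using that[of u C "[]"] GDel charging_remove[OF _ assms(2,3)] by (simp add: add_le_mono)
next
  case (BQry x)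
  show thesis
  proof (cases "present x s")
    case True
    then obtain v where "(x, v) \<in> set s" by (auto simp: present_def)
    with charging_bad_query[OF _ assms(2,3)] obtain C' where
      "overtakers_paid (mtf x s) u C'" "good_sum (mtf x s) u = good_sum s u"
      "good_sum (mtf x s) C' \<le> good_sum s C + ngood s * depth x s" by blast
    with that[of u C' "[]"] True BQry show thesis by (simp add: qcost_def)
  qed (use that[of u C "[]"] BQry assms(3) in simp)
next
  case (BDel x)
  show thesis
  proof (cases "present x s")
    case True
    then obtain v where "(x, v) \<in> set s" by (auto simp: present_def)
    from charging_remove[OF this assms(2,3)]
    have "overtakers_paid (remove_obj x s) u C" "good_sum (remove_obj x s) u \<le> good_sum s u"
      "good_sum (remove_obj x s) C \<le> good_sum s C" by auto
    with that[of u C "[]"] True BDel show thesis by simp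
  qed (use that[of u C "[]"] BDel assms(3) in simp)
qed

text \<open>\<open>zs\<close> lists the excesses of the good queries; \<open>good_sum s u\<close> is the insertion cost
  prepaid for the objects currently in the list.\<close>

lemma query_excesses:
  assumes "valid s rs" "distinct (map fst s)" "overtakers_paid s u C"
  shows "\<exists>zs. length zs = total good_qry_count s rs \<and>
    total good_qry_cost s rs
      \<le> maxgood s rs * length zs + good_sum s u + total good_ins_cost s rs + sum_list zs \<and>
    (\<Sum>z\<leftarrow>zs. z * (z + 1)) \<le> 2 * good_sum s C + 2 * maxgood s rs * total bad_cost s rs"
  using assms
proof (induction rs arbitrary: s u C)
  case Nil
  show ?case by simp
next
  case (Cons r rs)
  define M where "M = maxgood s (r # rs)"
  have M: "ngood s \<le> M" "maxgood (step s r) rs \<le> M"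
    by (simp_all add: M_def)
  from Cons.prems(1) have "ok s r" by simp
  then obtain u' C' zs0 where
    paid: "overtakers_paid (step s r) u' C'" and len: "length zs0 = good_qry_count s r" and
    cost: "good_qry_cost s r + good_sum (step s r) u'
      \<le> ngood s * length zs0 + good_sum s u + good_ins_cost s r + sum_list zs0" and
    bad: "(\<Sum>z\<leftarrow>zs0. z * (z + 1)) + 2 * good_sum (step s r) C'
      \<le> 2 * good_sum s C + 2 * ngood s * bad_cost s r"
    using Cons.prems(2,3) by (rule charging_step)
  from Cons.prems have "valid (step s r) rs" "distinct (map fst (step s r))"
    using distinct_step by auto
  with Cons.IH paid obtain zs where
    len': "length zs = total good_qry_count (step s r) rs" and
    cost': "total good_qry_cost (step s r) rs \<le> maxgood (step s r) rs * length zs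
      + good_sum (step s r) u' + total good_ins_cost (step s r) rs + sum_list zs" and
    bad': "(\<Sum>z\<leftarrow>zs. z * (z + 1))
      \<le> 2 * good_sum (step s r) C' + 2 * maxgood (step s r) rs * total bad_cost (step s r) rs"
    by blast
  have "ngood s * length zs0 \<le> M * length zs0"
    "maxgood (step s r) rs * length zs \<le> M * length zs"
    "ngood s * bad_cost s r \<le> M * bad_cost s r"
    "maxgood (step s r) rs * total bad_cost (step s r) rs \<le> M * total bad_cost (step s r) rs"
    using M by simp_all
  moreover have "M * length (zs0 @ zs) = M * length zs0 + M * length zs"
    "M * total bad_cost s (r # rs) = M * bad_cost s r + M * total bad_cost (step s r) rs"
    "sum_list (zs0 @ zs) = sum_list zs0 + sum_list zs"
    "(\<Sum>z\<leftarrow>zs0 @ zs. z * (z + 1)) = (\<Sum>z\<leftarrow>zs0. z * (z + 1)) + (\<Sum>z\<leftarrow>zs. z * (z + 1))"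
    by (simp_all add: algebra_simps)
  ultimately have "length (zs0 @ zs) = total good_qry_count s (r # rs) \<and>
    total good_qry_cost s (r # rs)
      \<le> M * length (zs0 @ zs) + good_sum s u + total good_ins_cost s (r # rs) + sum_list (zs0 @ zs) \<and>
    (\<Sum>z\<leftarrow>zs0 @ zs. z * (z + 1)) \<le> 2 * good_sum s C + 2 * M * total bad_cost s (r # rs)"
    using len cost bad len' cost' bad' unfolding total.simps length_append by linarith
  then show ?case unfolding M_def by blast
qed

lemma total_mono: "(\<And>s r. f s r \<le> g s r) \<Longrightarrow> total f s rs \<le> total g s rs"
  by (induction rs arbitrary: s) (auto intro: add_mono)

lemma good_qry_latency_le_cost: "good_qry_latency s r \<le> good_qry_cost s r"
  by (cases r) (simp_all add: qcost_def)

lemma sum_list_squared_le: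
  fixes xs :: "real list"
  shows "(sum_list xs)\<^sup>2 \<le> length xs * (\<Sum>x\<leftarrow>xs. x\<^sup>2)"
  using sum_squared_le_sum_of_squares[of "(!) xs" "{0..<length xs}"]
  by (simp add: sum_list_sum_nth[of xs] sum_list_sum_nth[of "map power2 xs"] mult.commute)

lemma sum_list_le_sqrt:
  fixes zs :: "nat list" and l B :: nat
  assumes "(\<Sum>z\<leftarrow>zs. z * (z + 1)) \<le> 2 * l * B"
  shows "real (sum_list zs) \<le> real l * sqrt (2 * real (length zs) * real B)"
proof -
  have "(\<Sum>z\<leftarrow>zs. z * z) \<le> 2 * l * B"
    by (rule order_trans[OF sum_list_mono assms]) simp
  have "(\<Sum>z\<leftarrow>zs. (real z)\<^sup>2) = real (\<Sum>z\<leftarrow>zs. z * z)"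
    by (induction zs) (simp_all add: power2_eq_square)
  also have "\<dots> \<le> real (2 * l * B)"
    using \<open>(\<Sum>z\<leftarrow>zs. z * z) \<le> 2 * l * B\<close> by (rule of_nat_mono)
  finally have squares: "(\<Sum>z\<leftarrow>zs. (real z)\<^sup>2) \<le> 2 * real l * real B"
    by simp
  have "(real (sum_list zs))\<^sup>2 \<le> real (length zs) * (\<Sum>z\<leftarrow>zs. (real z)\<^sup>2)"
    using sum_list_squared_le[of "map real zs"] by (simp add: sum_list_of_nat o_def)
  also have "\<dots> \<le> real (length zs) * (2 * real l * real B)"
    using squares by (rule mult_left_mono) simp
  also have "\<dots> \<le> (real l)\<^sup>2 * (2 * real (length zs) * real B)"
  proof -
    have "real l \<le> (real l)\<^sup>2"
      by (cases l) (simp_all add: power2_eq_square)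
    then show ?thesis
      using mult_right_mono[of "real l" "(real l)\<^sup>2" "2 * real (length zs) * real B"]
      by (simp add: mult_ac)
  qed
  finally have "real (sum_list zs) \<le> sqrt ((real l)\<^sup>2 * (2 * real (length zs) * real B))"
    by (rule real_le_rsqrt)
  then show ?thesis
    by (simp add: real_sqrt_mult)
qed

theorem lemma6:
  fixes rs :: "req list"
  assumes "valid [] rs"
  defines "A \<equiv> real (total good_ins_cost [] rs)"
      and "B \<equiv> real (total bad_cost [] rs)"
      and "q \<equiv> real (total good_qry_count [] rs)"
      and "ell \<equiv> real (maxgood [] rs)"
  shows "real (total good_qry_cost [] rs) \<le> A + ell * (q + sqrt (2 * q * B)) \<and>
         real (total good_qry_latency [] rs) \<le> A + ell * (q + sqrt (2 * q * B))"
proof -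
  obtain zs where len: "length zs = total good_qry_count [] rs"
    and cost: "total good_qry_cost [] rs
      \<le> maxgood [] rs * length zs + total good_ins_cost [] rs + sum_list zs"
    and excess: "(\<Sum>z\<leftarrow>zs. z * (z + 1)) \<le> 2 * maxgood [] rs * total bad_cost [] rs"
    using query_excesses[OF assms(1) _ overtakers_paid_Nil] by auto
  have "real (total good_qry_cost [] rs) \<le> ell * q + A + real (sum_list zs)"
    using of_nat_mono[OF cost] len by (simp add: A_def ell_def q_def)
  moreover have "real (sum_list zs) \<le> ell * sqrt (2 * q * B)"
    using sum_list_le_sqrt[OF excess] len by (simp add: ell_def q_def B_def)
  ultimately have "real (total good_qry_cost [] rs) \<le> A + ell * (q + sqrt (2 * q * B))"
    by (simp add: distrib_left)
  moreover have "total good_qry_latency [] rs \<le> total good_qry_cost [] rs"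
    using total_mono good_qry_latency_le_cost by blast
  ultimately show ?thesis by linarith
qed

end
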